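(* Let $\lambda$ be Lebesgue measure on $[0,1]$ and let $T:[0,1]\to[0,1]$ be an invertible, ergodic, $\lambda$-preserving transformation which is rigid rank 1 (in the sense defined in the context), with associated numbers $n_k$ and sets $A_k$. Define $$\mathcal{R}_k=\bigcup_{i=0}^{n_k-1}T^iA_k,\qquad \hat{\mathcal{R}}_k=\bigcup_{i=0}^{n_k-1}T^i\big(A_k\cap T^{-n_k}A_k\cap T^{n_k}A_k\big),$$ $$\tilde{\mathcal{R}}_k=\bigcup_{i=0}^{n_k-1}T^i\big(A_k\cap T^{-n_k}A_k\cap T^{-2n_k}A_k\cap T^{n_k}A_k\cap T^{2n_k}A_k\big).$$ Then $$\lim_{k\to\infty}\lambda(\tilde{\mathcal{R}}_k)=\lim_{k\to\infty}\lambda(\mathcal{R}_k)=\lim_{k\to\infty}\lambda(\hat{\mathcal{R}}_k)=1.$$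
   Context: $T$ is called rigid rank 1 if there exist positive integers $n_j$ and measurable sets $A_j\subset[0,1]$ such that: (1) $\lim_{j\to\infty}\lambda\big(\bigcup_{i=0}^{n_j-1}T^iA_j\big)=1$; (2) the sets $A_j,TA_j,\dots,T^{n_j-1}A_j$ are pairwise disjoint; (3) $\lim_{j\to\infty}\lambda(T^{n_j}A_j\cap A_j)/\lambda(A_j)=1$; (4) for every $\varepsilon>0$ there exist, for each $j$, metric balls $B^{(j)}_0,\dots,B^{(j)}_{n_j-1}\subset[0,1]$ of diameter at most $\varepsilon$ such that $\lim_{j\to\infty}\sum_{i=0}^{n_j-1}\lambda(T^iA_j\setminus B^{(j)}_i)=0$. *)

theory Defs
  imports "HOL-Analysis.Analysis"
begin

definition lam01 :: "real measure" where
  "lam01 = lebesgue_on {0..1}"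

definition invertible_mp :: "(real \<Rightarrow> real) \<Rightarrow> bool" where
  "invertible_mp T \<longleftrightarrow>
     bij_betw T {0..1} {0..1} \<and>
     T \<in> lam01 \<rightarrow>\<^sub>M lam01 \<and>
     the_inv_into {0..1} T \<in> lam01 \<rightarrow>\<^sub>M lam01 \<and>
     (\<forall>S \<in> sets lam01. measure lam01 (T -` S \<inter> {0..1}) = measure lam01 S)"

definition ergodic01 :: "(real \<Rightarrow> real) \<Rightarrow> bool" where
  "ergodic01 T \<longleftrightarrow>
     (\<forall>S \<in> sets lam01. T -` S \<inter> {0..1} = S \<longrightarrow>
        measure lam01 S = 0 \<or> measure lam01 S = 1)"

definition ball01 :: "real set \<Rightarrow> bool" where
  "ball01 B \<longleftrightarrow> (\<exists>c r. c \<in> {0..1} \<and> B = ball c r \<inter> {0..1})"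

definition rigid_rank1_witness ::
    "(real \<Rightarrow> real) \<Rightarrow> (nat \<Rightarrow> nat) \<Rightarrow> (nat \<Rightarrow> real set) \<Rightarrow> bool" where
  "rigid_rank1_witness T n A \<longleftrightarrow>
     (\<forall>j. 0 < n j \<and> A j \<in> sets lam01) \<and>
     (\<lambda>j. measure lam01 (\<Union>i<n j. (T ^^ i) ` A j)) \<longlonglongrightarrow> 1 \<and>
     (\<forall>j. disjoint_family_on (\<lambda>i. (T ^^ i) ` A j) {..<n j}) \<and>
     (\<lambda>j. measure lam01 ((T ^^ n j) ` A j \<inter> A j) / measure lam01 (A j)) \<longlonglongrightarrow> 1 \<and>
     (\<forall>\<epsilon>>0. \<exists>B :: nat \<Rightarrow> nat \<Rightarrow> real set.
        (\<forall>j i. i < n j \<longrightarrow> ball01 (B j i) \<and> diameter (B j i) \<le> \<epsilon>) \<and>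
        (\<lambda>j. \<Sum>i<n j. measure lam01 ((T ^^ i) ` A j - B j i)) \<longlonglongrightarrow> 0)"

definition rigid_rank1 :: "(real \<Rightarrow> real) \<Rightarrow> bool" where
  "rigid_rank1 T \<longleftrightarrow> (\<exists>n A. rigid_rank1_witness T n A)"

end

theory Submission
  imports Defs
begin

text \<open>Write \<open>e = \<lambda>(A) - \<lambda>(T\<^sup>n A \<inter> A)\<close>. Because \<open>T\<close> and \<open>T\<inverse>\<close> preserve measure,
  each of \<open>A - T\<^sup>-\<^sup>n A\<close>, \<open>T\<^sup>-\<^sup>n A - T\<^sup>-\<^sup>2\<^sup>n A\<close>, \<open>A - T\<^sup>n A\<close> and \<open>T\<^sup>n A - T\<^sup>2\<^sup>n A\<close>
  has measure \<open>e\<close>, so the bases of the two smaller towers miss at most \<open>4e\<close> of \<open>A\<close>.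
  A tower over a subset \<open>Q\<close> of \<open>A\<close> has measure \<open>n \<lambda>(Q)\<close>, and rigidity says exactly that
  \<open>n e = n \<lambda>(A) (1 - \<lambda>(T\<^sup>n A \<inter> A) / \<lambda>(A)) \<longrightarrow> 1 \<cdot> 0 = 0\<close>.\<close>

lemma tendsto_scaled_defect_zero:
  fixes x a m :: "nat \<Rightarrow> real"
  assumes "(\<lambda>k. x k * a k) \<longlonglongrightarrow> 1" and "(\<lambda>k. m k / a k) \<longlonglongrightarrow> 1"
    and "\<And>k. a k = 0 \<Longrightarrow> m k = 0"
  shows "(\<lambda>k. x k * (a k - m k)) \<longlonglongrightarrow> 0"
proof -
  have "(\<lambda>k. x k * (a k - m k)) = (\<lambda>k. (x k * a k) * (1 - m k / a k))"
    using assms(3) by (intro ext, case_tac "a k = 0") (simp_all add: field_simps)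
  moreover have "(\<lambda>k. (x k * a k) * (1 - m k / a k)) \<longlonglongrightarrow> 1 * (1 - 1)"
    by (intro tendsto_intros assms(1,2))
  ultimately show ?thesis by simp
qed

locale invertible_measure_preserving = finite_measure M for M :: "'a measure" +
  fixes T :: "'a \<Rightarrow> 'a"
  assumes bij: "bij_betw T (space M) (space M)"
    and measurable: "T \<in> M \<rightarrow>\<^sub>M M"
    and sets_image: "S \<in> sets M \<Longrightarrow> T ` S \<in> sets M"
    and measure_vimage: "S \<in> sets M \<Longrightarrow> measure M (T -` S \<inter> space M) = measure M S"
begin

lemma sets_vimage: "S \<in> sets M \<Longrightarrow> T -` S \<inter> space M \<in> sets M"
  using measurable_sets[OF measurable] .

lemma measure_image:
  assumes "S \<in> sets M"
  shows "measure M (T ` S) = measure M S"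
proof -
  have "T -` (T ` S) \<inter> space M = S"
    using sets.sets_into_space[OF assms] bij_betw_imp_inj_on[OF bij]
    by (auto dest: inj_onD)
  then show ?thesis
    using measure_vimage[OF sets_image[OF assms]] by simp
qed

lemma invertible_measure_preserving_funpow: "invertible_measure_preserving M (T ^^ i)"
proof (induction i)
  case 0
  show ?case
  proof unfold_locales
    show "measure M ((T ^^ 0) -` S \<inter> space M) = measure M S" if "S \<in> sets M" for S
      using sets.sets_into_space[OF that] by (simp add: Int_absorb2)
  qed (simp_all add: bij_betw_def measurable_id measurable_ident)
next
  case (Suc i)
  then interpret P: invertible_measure_preserving M "T ^^ i" .
  have vimage_Suc: "(T ^^ Suc i) -` S \<inter> space M = T -` ((T ^^ i) -` S \<inter> space M) \<inter> space M" for S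
    using bij_betw_apply[OF bij] by (auto simp: funpow_swap1)
  show ?case
  proof unfold_locales
    show "bij_betw (T ^^ Suc i) (space M) (space M)"
      by (rule bij_betw_funpow[OF bij])
    show "T ^^ Suc i \<in> M \<rightarrow>\<^sub>M M"
      unfolding funpow_Suc_right by (rule measurable_comp[OF measurable P.measurable])
    show "(T ^^ Suc i) ` S \<in> sets M" if "S \<in> sets M" for S
      using sets_image[OF P.sets_image[OF that]] by (simp add: image_comp)
    show "measure M ((T ^^ Suc i) -` S \<inter> space M) = measure M S" if "S \<in> sets M" for S
      unfolding vimage_Suc
      using measure_vimage[OF P.sets_vimage[OF that]] P.measure_vimage[OF that] by simp
  qed
qed

lemma measure_diff_vimage:
  assumes "A \<in> sets M"
  shows "measure M (A - T -` A \<inter> space M) = measure M A - measure M (T ` A \<inter> A)"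
proof -
  have "T ` (A \<inter> (T -` A \<inter> space M)) = T ` A \<inter> A"
    using sets.sets_into_space[OF assms] by auto
  then have "measure M (A \<inter> (T -` A \<inter> space M)) = measure M (T ` A \<inter> A)"
    using measure_image[of "A \<inter> (T -` A \<inter> space M)"] assms sets_vimage by auto
  then show ?thesis
    using finite_measure_Diff'[OF assms sets_vimage[OF assms]] by linarith
qed

lemma measure_diff_image:
  assumes "A \<in> sets M"
  shows "measure M (A - T ` A) = measure M A - measure M (T ` A \<inter> A)"
  using finite_measure_Diff'[OF assms sets_image[OF assms]] by (simp add: Int_commute)

lemma measure_diff_single_return:
  assumes "A \<in> sets M"
  shows "measure M (A - (A \<inter> (T -` A \<inter> space M) \<inter> T ` A))
    \<le> 2 * (measure M A - measure M (T ` A \<inter> A))"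
proof -
  have "measure M (A - (A \<inter> (T -` A \<inter> space M) \<inter> T ` A))
      \<le> measure M ((A - T -` A \<inter> space M) \<union> (A - T ` A))"
    by (intro finite_measure_mono sets.Un sets.Diff assms sets_vimage sets_image) auto
  also have "\<dots> \<le> measure M (A - T -` A \<inter> space M) + measure M (A - T ` A)"
    by (intro measure_Un_le sets.Diff assms sets_vimage sets_image)
  finally show ?thesis
    using measure_diff_vimage[OF assms] measure_diff_image[OF assms]
    unfolding right_diff_distrib by linarith
qed

lemma measure_diff_double_return:
  assumes A: "A \<in> sets M"
  shows "measure M (A - (A \<inter> (T -` A \<inter> space M) \<inter> ((T ^^ 2) -` A \<inter> space M)
      \<inter> T ` A \<inter> (T ^^ 2) ` A)) \<le> 4 * (measure M A - measure M (T ` A \<inter> A))"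
proof -
  interpret T2: invertible_measure_preserving M "T ^^ 2"
    by (rule invertible_measure_preserving_funpow)
  let ?P1 = "T -` A \<inter> space M" and ?P2 = "(T ^^ 2) -` A \<inter> space M"
  let ?I1 = "T ` A" and ?I2 = "(T ^^ 2) ` A"
  have sets: "?P1 \<in> sets M" "?P2 \<in> sets M" "?I1 \<in> sets M" "?I2 \<in> sets M"
    using A by (simp_all add: sets_vimage sets_image T2.sets_vimage T2.sets_image)
  have "?P1 - ?P2 = T -` (A - ?P1) \<inter> space M"
    using bij_betw_apply[OF bij] by (auto simp: numeral_2_eq_2)
  then have P12: "measure M (?P1 - ?P2) = measure M (A - ?P1)"
    using measure_vimage[OF sets.Diff[OF A sets(1)]] by (simp only:)
  have "?I1 - ?I2 = T ` A - T ` ?I1"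
    by (simp add: numeral_2_eq_2 image_comp)
  also have "\<dots> = T ` (A - ?I1)"
    using sets.sets_into_space[OF A] sets.sets_into_space[OF sets(3)]
    by (intro inj_on_image_set_diff[OF bij_betw_imp_inj_on[OF bij], symmetric]) auto
  finally have I12: "measure M (?I1 - ?I2) = measure M (A - ?I1)"
    using measure_image[OF sets.Diff[OF A sets(3)]] by (simp only:)
  have "measure M (A - (A \<inter> ?P1 \<inter> ?P2 \<inter> ?I1 \<inter> ?I2))
      \<le> measure M ((A - ?P1) \<union> (?P1 - ?P2) \<union> (A - ?I1) \<union> (?I1 - ?I2))"
    by (intro finite_measure_mono sets.Un sets.Diff A sets) blast
  also have "\<dots> \<le> measure M ((A - ?P1) \<union> (?P1 - ?P2) \<union> (A - ?I1))
      + measure M (?I1 - ?I2)"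
    by (intro measure_Un_le sets.Un sets.Diff A sets)
  also have "\<dots> \<le> measure M ((A - ?P1) \<union> (?P1 - ?P2)) + measure M (A - ?I1)
      + measure M (?I1 - ?I2)"
    by (intro add_right_mono measure_Un_le sets.Un sets.Diff A sets)
  also have "\<dots> \<le> measure M (A - ?P1) + measure M (?P1 - ?P2) + measure M (A - ?I1)
      + measure M (?I1 - ?I2)"
    by (intro add_right_mono measure_Un_le sets.Diff A sets)
  finally show ?thesis
    using P12 I12 measure_diff_vimage[OF A] measure_diff_image[OF A]
    unfolding right_diff_distrib by linarith
qed

lemma measure_tower:
  assumes "disjoint_family_on (\<lambda>i. (T ^^ i) ` A) {..<N}" and "Q \<in> sets M" and "Q \<subseteq> A"
  shows "measure M (\<Union>i<N. (T ^^ i) ` Q) = N * measure M Q"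
proof -
  interpret P: invertible_measure_preserving M "T ^^ i" for i
    by (rule invertible_measure_preserving_funpow)
  have "measure M (\<Union>i<N. (T ^^ i) ` Q) = (\<Sum>i<N. measure M ((T ^^ i) ` Q))"
  proof (rule finite_measure_finite_Union)
    show "(\<lambda>i. (T ^^ i) ` Q) ` {..<N} \<subseteq> sets M"
      using P.sets_image[OF assms(2)] by auto
    show "disjoint_family_on (\<lambda>i. (T ^^ i) ` Q) {..<N}"
      using assms(1,3) unfolding disjoint_family_on_def by blast
  qed simp
  also have "\<dots> = N * measure M Q"
    using P.measure_image[OF assms(2)] by simp
  finally show ?thesis .
qed

context
  fixes n :: "nat \<Rightarrow> nat" and A :: "nat \<Rightarrow> 'a set"
  assumes A: "\<And>k. A k \<in> sets M"
    and disj: "\<And>k. disjoint_family_on (\<lambda>i. (T ^^ i) ` A k) {..<n k}"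
    and tower: "(\<lambda>k. measure M (\<Union>i<n k. (T ^^ i) ` A k)) \<longlonglongrightarrow> 1"
    and rigid: "(\<lambda>k. measure M ((T ^^ n k) ` A k \<inter> A k) / measure M (A k)) \<longlonglongrightarrow> 1"
begin

lemma tendsto_measure_subtower:
  fixes Q :: "nat \<Rightarrow> 'a set" and c :: real
  assumes Q: "\<And>k. Q k \<in> sets M" "\<And>k. Q k \<subseteq> A k"
    and defect: "\<And>k. measure M (A k - Q k)
                  \<le> c * (measure M (A k) - measure M ((T ^^ n k) ` A k \<inter> A k))"
  shows "(\<lambda>k. measure M (\<Union>i<n k. (T ^^ i) ` Q k)) \<longlonglongrightarrow> 1"
proof -
  interpret N: invertible_measure_preserving M "T ^^ n k" for k
    by (rule invertible_measure_preserving_funpow)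
  define a where "a k = measure M (A k)" for k
  define m where "m k = measure M ((T ^^ n k) ` A k \<inter> A k)" for k
  define d where "d k = measure M (A k - Q k)" for k
  define t where "t k = measure M (\<Union>i<n k. (T ^^ i) ` Q k)" for k
  have na: "(\<lambda>k. n k * a k) \<longlonglongrightarrow> 1"
    using tower unfolding measure_tower[OF disj A order_refl] a_def .
  have "m k \<le> a k" for k
    using finite_measure_mono[OF Int_lower1 N.sets_image[OF A]] N.measure_image[OF A]
    unfolding a_def m_def by metis
  then have "a k = 0 \<Longrightarrow> m k = 0" for k
    unfolding m_def by (metis antisym measure_nonneg)
  moreover have "(\<lambda>k. m k / a k) \<longlonglongrightarrow> 1"
    using rigid unfolding a_def m_def .
  ultimately have "(\<lambda>k. n k * (a k - m k)) \<longlonglongrightarrow> 0"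
    using tendsto_scaled_defect_zero[OF na] by blast
  then have lower: "(\<lambda>k. n k * a k - c * (n k * (a k - m k))) \<longlonglongrightarrow> 1"
    using tendsto_diff[OF na tendsto_mult_left[of _ 0 _ c]] by simp
  have t_eq: "t k = n k * (a k - d k)" for k
    using measure_tower[OF disj Q, of k] finite_measure_Diff[OF A Q(1) Q(2), of k]
    unfolding t_def a_def d_def by simp
  have "n k * d k \<le> n k * (c * (a k - m k))" for k
    using defect[of k] unfolding a_def m_def d_def by (simp add: mult_left_mono)
  then have "n k * a k - c * (n k * (a k - m k)) \<le> t k" for k
    unfolding t_eq by (simp add: algebra_simps)
  moreover have "t k \<le> n k * a k" for k
    unfolding t_eq d_def by (simp add: mult_left_mono)
  ultimately show ?thesis
    unfolding t_def by (intro tendsto_sandwich[OF _ _ lower na] always_eventually allI)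
qed

lemma tendsto_measure_single_return_tower:
  "(\<lambda>k. measure M (\<Union>i<n k. (T ^^ i) `
      (A k \<inter> ((T ^^ n k) -` A k \<inter> space M) \<inter> (T ^^ n k) ` A k))) \<longlonglongrightarrow> 1"
proof (rule tendsto_measure_subtower)
  interpret N: invertible_measure_preserving M "T ^^ n k" for k
    by (rule invertible_measure_preserving_funpow)
  show "A k \<inter> ((T ^^ n k) -` A k \<inter> space M) \<inter> (T ^^ n k) ` A k \<in> sets M" for k
    by (intro sets.Int A N.sets_vimage N.sets_image)
  show "A k \<inter> ((T ^^ n k) -` A k \<inter> space M) \<inter> (T ^^ n k) ` A k \<subseteq> A k" for k
    by blast
  show "measure M (A k - A k \<inter> ((T ^^ n k) -` A k \<inter> space M) \<inter> (T ^^ n k) ` A k)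
      \<le> 2 * (measure M (A k) - measure M ((T ^^ n k) ` A k \<inter> A k))" for k
    by (rule N.measure_diff_single_return[OF A])
qed

lemma tendsto_measure_double_return_tower:
  "(\<lambda>k. measure M (\<Union>i<n k. (T ^^ i) `
      (A k \<inter> ((T ^^ n k) -` A k \<inter> space M) \<inter> ((T ^^ (2 * n k)) -` A k \<inter> space M)
        \<inter> (T ^^ n k) ` A k \<inter> (T ^^ (2 * n k)) ` A k))) \<longlonglongrightarrow> 1"
proof (rule tendsto_measure_subtower)
  interpret N: invertible_measure_preserving M "T ^^ n k" for k
    by (rule invertible_measure_preserving_funpow)
  interpret N2: invertible_measure_preserving M "T ^^ (2 * n k)" for k
    by (rule invertible_measure_preserving_funpow)
  have square: "T ^^ (2 * n k) = (T ^^ n k) ^^ 2" for k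
    by (simp add: funpow_mult mult.commute)
  show "A k \<inter> ((T ^^ n k) -` A k \<inter> space M) \<inter> ((T ^^ (2 * n k)) -` A k \<inter> space M)
      \<inter> (T ^^ n k) ` A k \<inter> (T ^^ (2 * n k)) ` A k \<in> sets M" for k
    by (intro sets.Int A N.sets_vimage N.sets_image N2.sets_vimage N2.sets_image)
  show "A k \<inter> ((T ^^ n k) -` A k \<inter> space M) \<inter> ((T ^^ (2 * n k)) -` A k \<inter> space M)
      \<inter> (T ^^ n k) ` A k \<inter> (T ^^ (2 * n k)) ` A k \<subseteq> A k" for k
    by blast
  show "measure M (A k - A k \<inter> ((T ^^ n k) -` A k \<inter> space M) \<inter> ((T ^^ (2 * n k)) -` A k \<inter> space M)
      \<inter> (T ^^ n k) ` A k \<inter> (T ^^ (2 * n k)) ` A k)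
      \<le> 4 * (measure M (A k) - measure M ((T ^^ n k) ` A k \<inter> A k))" for k
    unfolding square by (rule N.measure_diff_double_return[OF A])
qed

end

end

lemma space_lam01: "space lam01 = {0..1}"
  unfolding lam01_def by simp

lemma invertible_mp_imp_invertible_measure_preserving:
  assumes "invertible_mp T"
  shows "invertible_measure_preserving lam01 T"
proof -
  have bij: "bij_betw T {0..1} {0..1}"
    and measurable: "T \<in> lam01 \<rightarrow>\<^sub>M lam01"
    and inv: "the_inv_into {0..1} T \<in> lam01 \<rightarrow>\<^sub>M lam01"
    and preserving: "\<And>S. S \<in> sets lam01 \<Longrightarrow> measure lam01 (T -` S \<inter> {0..1}) = measure lam01 S"
    using assms unfolding invertible_mp_def by blast+
  show ?thesis
  proof (intro invertible_measure_preserving.intro invertible_measure_preserving_axioms.intro)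
    show "finite_measure lam01"
      unfolding lam01_def by (rule finite_measure_lebesgue_on) simp
    show "bij_betw T (space lam01) (space lam01)"
      using bij unfolding space_lam01 .
    show "T ` S \<in> sets lam01" if "S \<in> sets lam01" for S
      using the_inv_into_vimage[OF bij_betw_imp_inj_on[OF bij] sets.sets_into_space[OF that, unfolded space_lam01]]
        bij_betw_imp_surj_on[OF bij] measurable_sets[OF inv that] space_lam01 by simp
    show "measure lam01 (T -` S \<inter> space lam01) = measure lam01 S" if "S \<in> sets lam01" for S
      using preserving[OF that] unfolding space_lam01 .
  qed (rule measurable)
qed

theorem mainTheorem1:
  fixes T :: "real \<Rightarrow> real" and n :: "nat \<Rightarrow> nat" and A :: "nat \<Rightarrow> real set"
  assumes "invertible_mp T" and "ergodic01 T"
    and "rigid_rank1_witness T n A"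
  shows "(\<lambda>k. measure lam01 (\<Union>i<n k. (T ^^ i) `
            (A k \<inter> ((T ^^ n k) -` A k \<inter> {0..1}) \<inter> ((T ^^ (2 * n k)) -` A k \<inter> {0..1})
                 \<inter> (T ^^ n k) ` A k \<inter> (T ^^ (2 * n k)) ` A k))) \<longlonglongrightarrow> 1 \<and>
         (\<lambda>k. measure lam01 (\<Union>i<n k. (T ^^ i) ` A k)) \<longlonglongrightarrow> 1 \<and>
         (\<lambda>k. measure lam01 (\<Union>i<n k. (T ^^ i) `
            (A k \<inter> ((T ^^ n k) -` A k \<inter> {0..1}) \<inter> (T ^^ n k) ` A k))) \<longlonglongrightarrow> 1"
proof -
  interpret invertible_measure_preserving lam01 T
    by (rule invertible_mp_imp_invertible_measure_preserving[OF assms(1)])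
  note witness = assms(3)[unfolded rigid_rank1_witness_def]
  have A: "\<And>k. A k \<in> sets lam01"
    using witness[THEN conjunct1] by blast
  note tower = witness[THEN conjunct2, THEN conjunct1]
  note disj = witness[THEN conjunct2, THEN conjunct2, THEN conjunct1, rule_format]
  note rigid = witness[THEN conjunct2, THEN conjunct2, THEN conjunct2, THEN conjunct1]
  show ?thesis
    using tendsto_measure_double_return_tower[OF A disj tower rigid] tower
      tendsto_measure_single_return_tower[OF A disj tower rigid]
    unfolding space_lam01 by (intro conjI)
qed

end
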